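(* Let \(m\) be a positive integer that is not a perfect square, and let \(a,b,c\) be positive integers with \(\gcd(a,b^2-c^2m)=1\). Then \[Frob(a,\,b+c\sqrt m)=(a-1)(b+c\sqrt m-1)(1+\sqrt m)+\mathbb N[\sqrt m].\]
   Context: \(\mathbb N\) denotes the set of non-negative integers. \(\mathbb Z[\sqrt m]=\{u+v\sqrt m\mid u,v\in\mathbb Z\}\) and \(\mathbb N[\sqrt m]=\{u+v\sqrt m\mid u,v\in\mathbb N\}\). For \(\alpha_1,\alpha_2\in\mathbb Z[\sqrt m]\), \(SG(\alpha_1,\alpha_2)=\{\lambda_1\alpha_1+\lambda_2\alpha_2\mid \lambda_1,\lambda_2\in\mathbb N[\sqrt m]\}\) and \(Frob(\alpha_1,\alpha_2)=\{w\in\mathbb Z[\sqrt m]\mid w+\mathbb N[\sqrt m]\subseteq SG(\alpha_1,\alpha_2)\}\). *)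

theory Defs
  imports Complex_Main
begin

definition Zsqrt :: "int \<Rightarrow> real set" where
  "Zsqrt m = {real_of_int u + real_of_int v * sqrt (real_of_int m) | u v. True}"

definition Nsqrt :: "int \<Rightarrow> real set" where
  "Nsqrt m = {real u + real v * sqrt (real_of_int m) | u v :: nat. True}"

definition SG :: "int \<Rightarrow> real \<Rightarrow> real \<Rightarrow> real set" where
  "SG m \<alpha>1 \<alpha>2 = {l1 * \<alpha>1 + l2 * \<alpha>2 | l1 l2. l1 \<in> Nsqrt m \<and> l2 \<in> Nsqrt m}"

definition Frob :: "int \<Rightarrow> real \<Rightarrow> real \<Rightarrow> real set" where
  "Frob m \<alpha>1 \<alpha>2 = {w \<in> Zsqrt m. (\<lambda>x. w + x) ` Nsqrt m \<subseteq> SG m \<alpha>1 \<alpha>2}"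

end

theory Submission
  imports Defs "HOL-Computational_Algebra.Nth_Powers"
begin

text \<open>
  Since m is not a square, every element of \<open>\<int>[\<surd>m]\<close> has unique coordinates in the basis
  1, \<open>\<surd>m\<close>, and \<open>(x + y\<surd>m) a + (p + q\<surd>m) (b + c\<surd>m)\<close> has coordinates
  \<open>(ax + pb + qcm, ay + pc + qb)\<close>. Modulo a, the linear map \<open>(p, q) \<mapsto> (pb + qcm, pc + qb)\<close>
  has determinant \<open>b\<^sup>2 - c\<^sup>2m\<close>, a unit mod a, so it is a bijection on residue pairs.
  Hence a point \<open>(U, V)\<close> with \<open>U \<ge> (a-1)(b-1+cm)\<close> and \<open>V \<ge> (a-1)(b-1+c)\<close> is reached with
  \<open>0 \<le> p, q < a\<close> and \<open>x, y \<ge> 0\<close>. Conversely, a point congruent to \<open>(a-1)(b+cm, b+c)\<close>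
  forces \<open>p \<equiv> q \<equiv> -1\<close> mod a, hence \<open>p, q \<ge> a - 1\<close>, so it lies above \<open>(a-1)(b+cm, b+c)\<close>;
  since every point has a congruent one at distance less than a in each coordinate,
  no point below the corner has all its shifts in the semigroup.
\<close>

definition zsqrt :: "int \<Rightarrow> int \<Rightarrow> int \<Rightarrow> real" where
  "zsqrt m u v = real_of_int u + real_of_int v * sqrt (real_of_int m)"

lemma Zsqrt_eq: "Zsqrt m = {zsqrt m u v | u v. True}"
  by (simp add: Zsqrt_def zsqrt_def)

lemma Nsqrt_eq: "Nsqrt m = {zsqrt m u v | u v. 0 \<le> u \<and> 0 \<le> v}"
proof (intro set_eqI iffI)
  fix z assume "z \<in> Nsqrt m"
  then obtain u v :: nat where "z = real u + real v * sqrt (real_of_int m)"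
    unfolding Nsqrt_def by blast
  then show "z \<in> {zsqrt m u v | u v. 0 \<le> u \<and> 0 \<le> v}"
    unfolding zsqrt_def by (intro CollectI exI[of _ "int u"] exI[of _ "int v"]) simp
next
  fix z assume "z \<in> {zsqrt m u v | u v. 0 \<le> u \<and> 0 \<le> v}"
  then obtain u v where "z = zsqrt m u v" "0 \<le> u" "0 \<le> v"
    by blast
  then show "z \<in> Nsqrt m"
    unfolding Nsqrt_def zsqrt_def by (intro CollectI exI[of _ "nat u"] exI[of _ "nat v"]) simp
qed

lemma zsqrt_add: "zsqrt m u v + zsqrt m u' v' = zsqrt m (u + u') (v + v')"
  by (simp add: zsqrt_def algebra_simps)

lemma zsqrt_inject:
  assumes "0 \<le> m" and "\<not> is_nth_power 2 m"
  shows "zsqrt m u v = zsqrt m u' v' \<longleftrightarrow> u = u' \<and> v = v'"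
proof
  assume eq: "zsqrt m u v = zsqrt m u' v'"
  have "v = v'"
  proof (rule ccontr)
    assume "v \<noteq> v'"
    have "real_of_int (v - v') * sqrt (real_of_int m) = real_of_int (u' - u)"
      using eq by (simp add: zsqrt_def algebra_simps)
    then have "real_of_int (m * (v - v')\<^sup>2) = real_of_int ((u' - u)\<^sup>2)"
      using \<open>0 \<le> m\<close> by (metis of_int_mult of_int_power power_mult_distrib
          real_sqrt_pow2 of_int_0_le_iff mult.commute)
    then have "is_nth_power 2 (m * (v - v')\<^sup>2)"
      unfolding of_int_eq_iff by auto
    then have "is_nth_power 2 m"
      using is_nth_power_mult_cancel_right[of 2 "(v - v')\<^sup>2" m] \<open>v \<noteq> v'\<close> by simp
    with assms(2) show False ..
  qed
  with eq show "u = u' \<and> v = v'"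
    by (simp add: zsqrt_def)
qed simp

text \<open>\<open>SG_coords m a b c U V\<close> says that \<open>U + V\<surd>m \<in> SG(a, b + c\<surd>m)\<close>, witnessed by
  \<open>\<lambda>\<^sub>1 = x + y\<surd>m\<close> and \<open>\<lambda>\<^sub>2 = p + q\<surd>m\<close>.\<close>

definition SG_coords :: "int \<Rightarrow> int \<Rightarrow> int \<Rightarrow> int \<Rightarrow> int \<Rightarrow> int \<Rightarrow> bool" where
  "SG_coords m a b c U V \<longleftrightarrow> (\<exists>x y p q. 0 \<le> x \<and> 0 \<le> y \<and> 0 \<le> p \<and> 0 \<le> q \<and>
     U = a * x + p * b + q * c * m \<and> V = a * y + p * c + q * b)"

lemma SG_eq:
  assumes "0 \<le> m"
  shows "SG m (real_of_int a) (zsqrt m b c) = {zsqrt m U V | U V. SG_coords m a b c U V}"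
proof -
  have sq: "sqrt (real_of_int m) * sqrt (real_of_int m) = real_of_int m"
    using assms by simp
  have combination: "zsqrt m x y * real_of_int a + zsqrt m p q * zsqrt m b c
      = zsqrt m (a * x + p * b + q * c * m) (a * y + p * c + q * b)" for x y p q
    using sq unfolding zsqrt_def by (simp add: algebra_simps)
  show ?thesis
  proof (intro set_eqI iffI)
    fix z assume "z \<in> SG m (real_of_int a) (zsqrt m b c)"
    then obtain x y p q where "z = zsqrt m x y * real_of_int a + zsqrt m p q * zsqrt m b c"
      and "0 \<le> x" "0 \<le> y" "0 \<le> p" "0 \<le> q"
      unfolding SG_def Nsqrt_eq by blast
    then show "z \<in> {zsqrt m U V | U V. SG_coords m a b c U V}"
      unfolding combination SG_coords_def by blast
  next
    fix z assume "z \<in> {zsqrt m U V | U V. SG_coords m a b c U V}"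
    then obtain x y p q where "z = zsqrt m (a * x + p * b + q * c * m) (a * y + p * c + q * b)"
      and "0 \<le> x" "0 \<le> y" "0 \<le> p" "0 \<le> q"
      unfolding SG_coords_def by blast
    then show "z \<in> SG m (real_of_int a) (zsqrt m b c)"
      unfolding SG_def Nsqrt_eq combination[symmetric] by blast
  qed
qed

lemma zsqrt_shifts_subset_SG_iff:
  assumes "0 \<le> m" and "\<not> is_nth_power 2 m"
  shows "(\<lambda>x. zsqrt m U V + x) ` Nsqrt m \<subseteq> SG m (real_of_int a) (zsqrt m b c) \<longleftrightarrow>
    (\<forall>n1 n2. 0 \<le> n1 \<longrightarrow> 0 \<le> n2 \<longrightarrow> SG_coords m a b c (U + n1) (V + n2))"
proof -
  have shifts: "(\<lambda>x. zsqrt m U V + x) ` Nsqrt m =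
      {zsqrt m (U + n1) (V + n2) | n1 n2. 0 \<le> n1 \<and> 0 \<le> n2}"
    unfolding Nsqrt_eq by (auto simp: zsqrt_add image_iff) (blast, metis zsqrt_add)
  have member: "zsqrt m (U + n1) (V + n2) \<in> SG m (real_of_int a) (zsqrt m b c) \<longleftrightarrow>
      SG_coords m a b c (U + n1) (V + n2)" for n1 n2
    unfolding SG_eq[OF assms(1)] by (auto simp: zsqrt_inject[OF assms])
  show ?thesis
    unfolding shifts subset_iff member[symmetric] by blast
qed

lemma Frob_eq_zsqrt_shifts:
  assumes "0 \<le> m" and "\<not> is_nth_power 2 m"
  shows "Frob m (real_of_int a) (zsqrt m b c) =
    {zsqrt m U V | U V. \<forall>n1 n2. 0 \<le> n1 \<longrightarrow> 0 \<le> n2 \<longrightarrow> SG_coords m a b c (U + n1) (V + n2)}"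
proof (intro set_eqI iffI)
  fix z assume "z \<in> Frob m (real_of_int a) (zsqrt m b c)"
  then obtain U V where "z = zsqrt m U V"
    and "(\<lambda>x. zsqrt m U V + x) ` Nsqrt m \<subseteq> SG m (real_of_int a) (zsqrt m b c)"
    unfolding Frob_def Zsqrt_eq by blast
  then show "z \<in> {zsqrt m U V | U V.
      \<forall>n1 n2. 0 \<le> n1 \<longrightarrow> 0 \<le> n2 \<longrightarrow> SG_coords m a b c (U + n1) (V + n2)}"
    unfolding zsqrt_shifts_subset_SG_iff[OF assms] by blast
next
  fix z assume "z \<in> {zsqrt m U V | U V.
      \<forall>n1 n2. 0 \<le> n1 \<longrightarrow> 0 \<le> n2 \<longrightarrow> SG_coords m a b c (U + n1) (V + n2)}"
  then obtain U V where "z = zsqrt m U V"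
    and "(\<lambda>x. zsqrt m U V + x) ` Nsqrt m \<subseteq> SG m (real_of_int a) (zsqrt m b c)"
    unfolding zsqrt_shifts_subset_SG_iff[OF assms] by blast
  then show "z \<in> Frob m (real_of_int a) (zsqrt m b c)"
    unfolding Frob_def Zsqrt_eq by blast
qed

lemma zsqrt_plus_Nsqrt:
  "{zsqrt m u v + x | x. x \<in> Nsqrt m} = {zsqrt m U V | U V. u \<le> U \<and> v \<le> V}"
proof (intro set_eqI iffI)
  fix z assume "z \<in> {zsqrt m u v + x | x. x \<in> Nsqrt m}"
  then obtain n1 n2 where "z = zsqrt m (u + n1) (v + n2)" "0 \<le> n1" "0 \<le> n2"
    unfolding Nsqrt_eq by (auto simp: zsqrt_add)
  then show "z \<in> {zsqrt m U V | U V. u \<le> U \<and> v \<le> V}"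
    by force
next
  fix z assume "z \<in> {zsqrt m U V | U V. u \<le> U \<and> v \<le> V}"
  then obtain U V where "z = zsqrt m u v + zsqrt m (U - u) (V - v)" "u \<le> U" "v \<le> V"
    by (auto simp: zsqrt_add)
  then show "z \<in> {zsqrt m u v + x | x. x \<in> Nsqrt m}"
    unfolding Nsqrt_eq by force
qed

lemma dvd_coords_if_dvd_image:
  fixes a b c m p q :: int
  assumes "coprime a (b\<^sup>2 - c\<^sup>2 * m)"
    and "a dvd p * b + q * c * m" and "a dvd p * c + q * b"
  shows "a dvd p \<and> a dvd q"
proof -
  have "p * (b\<^sup>2 - c\<^sup>2 * m) = b * (p * b + q * c * m) - c * m * (p * c + q * b)"
   and "q * (b\<^sup>2 - c\<^sup>2 * m) = b * (p * c + q * b) - c * (p * b + q * c * m)"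
    by (simp_all add: algebra_simps power2_eq_square)
  then have "a dvd p * (b\<^sup>2 - c\<^sup>2 * m)" and "a dvd q * (b\<^sup>2 - c\<^sup>2 * m)"
    using assms(2,3) by simp_all
  then show ?thesis
    using assms(1) by (simp add: coprime_dvd_mult_left_iff)
qed

lemma residues_solving_congruences:
  fixes a b c m U V :: int
  assumes "0 < a" and "coprime a (b\<^sup>2 - c\<^sup>2 * m)"
  obtains p q where "0 \<le> p" "p < a" "0 \<le> q" "q < a"
    and "a dvd U - (p * b + q * c * m)" and "a dvd V - (p * c + q * b)"
proof -
  obtain e f where bezout: "e * (b\<^sup>2 - c\<^sup>2 * m) + f * a = 1"
    using bezout_int[of "b\<^sup>2 - c\<^sup>2 * m" a] assms(2)
    by (metis coprime_iff_gcd_eq_1 gcd.commute)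
  \<comment> \<open>Cramer's rule, with \<open>e\<close> an inverse of the determinant mod a\<close>
  define p where "p = (e * (b * U - c * m * V)) mod a"
  define q where "q = (e * (b * V - c * U)) mod a"
  have "a dvd p - e * (b * U - c * m * V)" and "a dvd q - e * (b * V - c * U)"
    unfolding p_def q_def by (simp_all flip: mod_eq_dvd_iff)
  moreover have "a dvd 1 - e * (b\<^sup>2 - c\<^sup>2 * m)"
    using bezout by (metis add_diff_cancel_left' dvd_triv_right)
  moreover have "U - (p * b + q * c * m) = (1 - e * (b\<^sup>2 - c\<^sup>2 * m)) * U
      - b * (p - e * (b * U - c * m * V)) - c * m * (q - e * (b * V - c * U))"
   and "V - (p * c + q * b) = (1 - e * (b\<^sup>2 - c\<^sup>2 * m)) * V
      - c * (p - e * (b * U - c * m * V)) - b * (q - e * (b * V - c * U))"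
    by (simp_all add: algebra_simps power2_eq_square)
  ultimately have "a dvd U - (p * b + q * c * m)" and "a dvd V - (p * c + q * b)"
    by simp_all
  moreover have "0 \<le> p" "p < a" "0 \<le> q" "q < a"
    using assms(1) by (simp_all add: p_def q_def)
  ultimately show ?thesis
    using that by blast
qed

lemma SG_coords_if_above_corner:
  fixes a b c m U V :: int
  assumes "0 < a" "0 \<le> b" "0 \<le> c" "0 \<le> m" "coprime a (b\<^sup>2 - c\<^sup>2 * m)"
    and "(a - 1) * (b - 1 + c * m) \<le> U" and "(a - 1) * (b - 1 + c) \<le> V"
  shows "SG_coords m a b c U V"
proof -
  obtain p q where pq: "0 \<le> p" "p < a" "0 \<le> q" "q < a"
    and "a dvd U - (p * b + q * c * m)" "a dvd V - (p * c + q * b)"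
    using residues_solving_congruences[OF assms(1,5)] .
  then obtain x y where x: "U - (p * b + q * c * m) = a * x" and y: "V - (p * c + q * b) = a * y"
    by (meson dvdE)
  have "p * b \<le> (a - 1) * b" "q * (c * m) \<le> (a - 1) * (c * m)"
    and "p * c \<le> (a - 1) * c" "q * b \<le> (a - 1) * b"
    using pq assms(2-4) by (simp_all add: mult_right_mono)
  then have "0 < a * (x + 1)" "0 < a * (y + 1)"
    using x y assms(6,7) by (simp_all add: algebra_simps)
  then have "0 \<le> x" "0 \<le> y"
    using assms(1) by (simp_all add: zero_less_mult_iff)
  with pq x y show ?thesis
    unfolding SG_coords_def
    by (intro exI[of _ x] exI[of _ y] exI[of _ p] exI[of _ q]) (simp add: algebra_simps)
qed

lemma SG_coords_above_if_congruent:
  fixes a b c m U V :: int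
  assumes "0 < a" "0 \<le> b" "0 \<le> c" "0 \<le> m" "coprime a (b\<^sup>2 - c\<^sup>2 * m)"
    and "SG_coords m a b c U V"
    and "a dvd U - (a - 1) * (b + c * m)" and "a dvd V - (a - 1) * (b + c)"
  shows "(a - 1) * (b + c * m) \<le> U \<and> (a - 1) * (b + c) \<le> V"
proof -
  obtain x y p q where xypq: "0 \<le> x" "0 \<le> y" "0 \<le> p" "0 \<le> q"
    and U: "U = a * x + p * b + q * c * m" and V: "V = a * y + p * c + q * b"
    using assms(6) unfolding SG_coords_def by blast
  have "U - (a - 1) * (b + c * m) = (p + 1) * b + (q + 1) * c * m + (x - b - c * m) * a"
   and "V - (a - 1) * (b + c) = (p + 1) * c + (q + 1) * b + (y - b - c) * a"
    unfolding U V by (simp_all add: algebra_simps)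
  with assms(7,8) have "a dvd (p + 1) * b + (q + 1) * c * m" "a dvd (p + 1) * c + (q + 1) * b"
    by simp_all
  then have "a dvd p + 1" "a dvd q + 1"
    using dvd_coords_if_dvd_image[OF assms(5)] by blast+
  then have "a \<le> p + 1" "a \<le> q + 1"
    using xypq by (simp_all add: zdvd_imp_le)
  then have "(a - 1) * b \<le> p * b" "(a - 1) * (c * m) \<le> q * (c * m)"
    and "(a - 1) * c \<le> p * c" "(a - 1) * b \<le> q * b" "0 \<le> a * x" "0 \<le> a * y"
    using xypq assms(1-4) by (simp_all add: mult_right_mono)
  then show ?thesis
    unfolding U V by (simp add: algebra_simps)
qed

lemma SG_coords_all_shifts_iff:
  fixes a b c m U V :: int
  assumes "0 < a" "0 \<le> b" "0 \<le> c" "0 \<le> m" "coprime a (b\<^sup>2 - c\<^sup>2 * m)"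
  shows "(\<forall>n1 n2. 0 \<le> n1 \<longrightarrow> 0 \<le> n2 \<longrightarrow> SG_coords m a b c (U + n1) (V + n2)) \<longleftrightarrow>
    (a - 1) * (b - 1 + c * m) \<le> U \<and> (a - 1) * (b - 1 + c) \<le> V"
proof
  assume shifts: "\<forall>n1 n2. 0 \<le> n1 \<longrightarrow> 0 \<le> n2 \<longrightarrow> SG_coords m a b c (U + n1) (V + n2)"
  define n1 where "n1 = ((a - 1) * (b + c * m) - U) mod a"
  define n2 where "n2 = ((a - 1) * (b + c) - V) mod a"
  have n: "0 \<le> n1" "n1 < a" "0 \<le> n2" "n2 < a"
    using assms(1) by (simp_all add: n1_def n2_def)
  have "a dvd n1 - ((a - 1) * (b + c * m) - U)" "a dvd n2 - ((a - 1) * (b + c) - V)"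
    unfolding n1_def n2_def by (simp_all flip: mod_eq_dvd_iff)
  then have "a dvd (U + n1) - (a - 1) * (b + c * m)" "a dvd (V + n2) - (a - 1) * (b + c)"
    by (simp_all add: algebra_simps)
  then have "(a - 1) * (b + c * m) \<le> U + n1 \<and> (a - 1) * (b + c) \<le> V + n2"
    using SG_coords_above_if_congruent[OF assms] shifts n by blast
  with n show "(a - 1) * (b - 1 + c * m) \<le> U \<and> (a - 1) * (b - 1 + c) \<le> V"
    by (simp add: algebra_simps)
next
  assume "(a - 1) * (b - 1 + c * m) \<le> U \<and> (a - 1) * (b - 1 + c) \<le> V"
  then show "\<forall>n1 n2. 0 \<le> n1 \<longrightarrow> 0 \<le> n2 \<longrightarrow> SG_coords m a b c (U + n1) (V + n2)"
    by (auto intro!: SG_coords_if_above_corner[OF assms])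
qed

theorem theorem2:
  fixes m a b c :: int
  assumes "m > 0" and "\<not> (\<exists>k::int. m = k ^ 2)"
    and "a > 0" and "b > 0" and "c > 0"
    and "gcd a (b ^ 2 - c ^ 2 * m) = 1"
  shows "Frob m (real_of_int a) (real_of_int b + real_of_int c * sqrt (real_of_int m)) =
    {(real_of_int a - 1) * (real_of_int b + real_of_int c * sqrt (real_of_int m) - 1)
       * (1 + sqrt (real_of_int m)) + x | x. x \<in> Nsqrt m}"
proof -
  have m: "0 \<le> m" "\<not> is_nth_power 2 m"
    using assms(1,2) by (auto simp: is_nth_power_def)
  have coprime: "coprime a (b\<^sup>2 - c\<^sup>2 * m)"
    using assms(6) by (simp add: coprime_iff_gcd_eq_1)
  have "sqrt (real_of_int m) * sqrt (real_of_int m) = real_of_int m"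
    using m(1) by simp
  then have corner: "(real_of_int a - 1) * (zsqrt m b c - 1) * (1 + sqrt (real_of_int m))
      = zsqrt m ((a - 1) * (b - 1 + c * m)) ((a - 1) * (b - 1 + c))"
    unfolding zsqrt_def by (simp add: algebra_simps)
  have "Frob m (real_of_int a) (zsqrt m b c)
      = {zsqrt m U V | U V. (a - 1) * (b - 1 + c * m) \<le> U \<and> (a - 1) * (b - 1 + c) \<le> V}"
    using Frob_eq_zsqrt_shifts[OF m] assms(4,5)
      SG_coords_all_shifts_iff[OF assms(3) _ _ m(1) coprime] by simp
  also have "\<dots> = {(real_of_int a - 1) * (zsqrt m b c - 1) * (1 + sqrt (real_of_int m)) + x
      | x. x \<in> Nsqrt m}"
    unfolding corner zsqrt_plus_Nsqrt ..
  finally show ?thesis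
    unfolding zsqrt_def .
qed

end
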